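(* Let $S$ and $S'$ be finite sets of pairwise disjoint axis-aligned rectangles in $\mathbb{R}^2$, and let $\mathcal{M}$ be a finite set of point-normal markers such that both $S$ and $S'$ are fully consistent with $\mathcal{M}$ (i.e. $\mathcal{M}$ is a marker-per-edge markup of both). Then $S=S'$.
   Context: An axis-aligned rectangle is a set $[a,b]\times[c,d]\subset\mathbb{R}^2$ with $a<b$, $c<d$. A (point-normal) marker is a pair $(p,n)$ with $p\in\mathbb{R}^2$ and $n\in\{(-1,0),(1,0),(0,1),(0,-1)\}$. A marker $(p,n)$ is on and aligned with an edge $e$ of a rectangle $Q$ if $p\in e$ and $n$ is the outward unit normal of $Q$ along $e$. A set of rectangles is consistent with a set of markers if every marker is on and aligned with an edge of one of the rectangles; it is fully consistent if moreover every edge of every rectangle in the set has at least one marker on and aligned with it. *)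

theory Defs
  imports Main "HOL-Library.Product_Plus" Complex_Main
begin

type_synonym point = "real \<times> real"
type_synonym marker = "point \<times> point"  (* (position p, normal n) *)

definition is_rect :: "point set \<Rightarrow> bool" where
  "is_rect Q \<longleftrightarrow> (\<exists>a b c d. a < b \<and> c < d \<and> Q = {a..b} \<times> {c..d})"

definition normals :: "point set" where
  "normals = {(-1,0), (1,0), (0,1), (0,-1)}"

definition is_marker :: "marker \<Rightarrow> bool" where
  "is_marker m \<longleftrightarrow> snd m \<in> normals"

definition edges :: "point set \<Rightarrow> (point set \<times> point) set" where
  "edges Q = {en. \<exists>a b c d. a < b \<and> c < d \<and> Q = {a..b} \<times> {c..d} \<and>
      en \<in> {({a} \<times> {c..d}, (-1,0)), ({b} \<times> {c..d}, (1,0)),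
            ({a..b} \<times> {d}, (0,1)), ({a..b} \<times> {c}, (0,-1))}}"

definition on_aligned :: "marker \<Rightarrow> (point set \<times> point) \<Rightarrow> bool" where
  "on_aligned m en \<longleftrightarrow> fst m \<in> fst en \<and> snd m = snd en"

definition consistent :: "point set set \<Rightarrow> marker set \<Rightarrow> bool" where
  "consistent S M \<longleftrightarrow> (\<forall>m\<in>M. \<exists>Q\<in>S. \<exists>en\<in>edges Q. on_aligned m en)"

definition fully_consistent :: "point set set \<Rightarrow> marker set \<Rightarrow> bool" where
  "fully_consistent S M \<longleftrightarrow> consistent S M \<and>
     (\<forall>Q\<in>S. \<forall>en\<in>edges Q. \<exists>m\<in>M. on_aligned m en)"

end

theory Submission
  imports Defs
begin

(* Suppose S and S' are both fully consistent with M but differ.  Among the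
   rectangles of the symmetric difference pick one, R = [a,b] x [c,d], whose top
   height d is minimal; so all rectangles of S and S' with top below d are shared
   ("S and S' agree below d").  Say R is in S.  The marker on the top edge of R
   must lie on the top edge of some R' = [a',b'] x [c',d] of S'; wlog R' is not
   taller than R, i.e. c <= c'.  Chasing the markers on the left, right and bottom
   edges of R and R' and using disjointness (and agreement below d for rectangles
   that are shorter than R) forces a = a', b = b', c = c', so R = R' lies in S',
   a contradiction. *)

section \<open>Rectangles and their sides\<close>

lemma rect_eq_iff:
  fixes a b c d a' b' c' d' :: real
  assumes "a < b" "c < d"
  shows "{a..b} \<times> {c..d} = {a'..b'} \<times> {c'..d'} \<longleftrightarrow> a = a' \<and> b = b' \<and> c = c' \<and> d = d'"
  using assms by (auto simp: times_eq_iff Icc_eq_Icc)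

definition side :: "real \<Rightarrow> real \<Rightarrow> real \<Rightarrow> real \<Rightarrow> point \<Rightarrow> point set" where
  "side a b c d n =
     (if n = (-1,0) then {a} \<times> {c..d} else if n = (1,0) then {b} \<times> {c..d}
      else if n = (0,1) then {a..b} \<times> {d} else {a..b} \<times> {c})"

lemma edges_rect:
  fixes a b c d :: real
  assumes "a < b" "c < d"
  shows "edges ({a..b} \<times> {c..d}) = (\<lambda>n. (side a b c d n, n)) ` normals"
proof -
  let ?E = "\<lambda>a b c d. {({a} \<times> {c..d}, (-1,0)), ({b} \<times> {c..d}, (1,0)),
                        ({a..b} \<times> {d}, (0,1)), ({a..b} \<times> {c}, (0,-1))} :: (point set \<times> point) set"
  have "edges ({a..b} \<times> {c..d}) = ?E a b c d"
  proof (rule set_eqI, rule iffI)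
    fix en assume "en \<in> edges ({a..b} \<times> {c..d})"
    then obtain a2 b2 c2 d2 where "{a..b} \<times> {c..d} = {a2..b2} \<times> {c2..d2}" "en \<in> ?E a2 b2 c2 d2"
      unfolding edges_def by blast
    then show "en \<in> ?E a b c d"
      by (simp only: rect_eq_iff[OF assms])
  next
    fix en assume "en \<in> ?E a b c d"
    then show "en \<in> edges ({a..b} \<times> {c..d})"
      unfolding edges_def using assms by blast
  qed
  also have "\<dots> = (\<lambda>n. (side a b c d n, n)) ` normals"
    by (simp add: normals_def side_def)
  finally show ?thesis .
qed

text \<open>The top height of a rectangle; well defined since the corners are unique.\<close>
definition rect_top :: "point set \<Rightarrow> real" where
  "rect_top Q = (THE d. \<exists>a b c. a < b \<and> c < d \<and> Q = {a..b} \<times> {c..d})"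

lemma rect_top_eq:
  fixes a b c d :: real
  assumes "a < b" "c < d"
  shows "rect_top ({a..b} \<times> {c..d}) = d"
  unfolding rect_top_def
proof (rule the_equality)
  show "\<exists>a' b' c'. a' < b' \<and> c' < d \<and> {a..b} \<times> {c..d} = {a'..b'} \<times> {c'..d}"
    using assms by blast
next
  fix d' assume "\<exists>a' b' c'. a' < b' \<and> c' < d' \<and> {a..b} \<times> {c..d} = {a'..b'} \<times> {c'..d'}"
  then obtain a' b' c' where "{a..b} \<times> {c..d} = {a'..b'} \<times> {c'..d'}"
    by blast
  then show "d' = d" by (simp add: rect_eq_iff[OF assms])
qed

definition disjoint_rects :: "point set set \<Rightarrow> bool" where
  "disjoint_rects S \<longleftrightarrow> (\<forall>Q\<in>S. is_rect Q) \<and> pairwise disjnt S"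

lemma disjoint_rects_same:
  assumes "disjoint_rects S" "P \<in> S" "Q \<in> S" "p \<in> P" "p \<in> Q"
  shows "P = Q"
  using assms unfolding disjoint_rects_def by (metis disjnt_iff pairwiseD)

section \<open>Transferring markers between two consistent families\<close>

text \<open>A marked side of a rectangle of S shares a point with the same side of a
  rectangle of T, namely the position of the marker.\<close>
lemma side_partner:
  assumes "fully_consistent S M" "consistent T M" "disjoint_rects T"
    and "{a..b} \<times> {c..d} \<in> S" "a < b" "c < d" "n \<in> normals"
  obtains a2 b2 c2 d2 where "{a2..b2} \<times> {c2..d2} \<in> T" "a2 < b2" "c2 < d2"
    "side a b c d n \<inter> side a2 b2 c2 d2 n \<noteq> {}"
proof -
  have "(side a b c d n, n) \<in> edges ({a..b} \<times> {c..d})"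
    using assms(5-7) by (simp add: edges_rect)
  then obtain m where m: "m \<in> M" "on_aligned m (side a b c d n, n)"
    using assms(1,4) unfolding fully_consistent_def by blast
  then obtain P e where P: "P \<in> T" "e \<in> edges P" "on_aligned m e"
    using assms(2) unfolding consistent_def by blast
  have "is_rect P"
    using P(1) assms(3) unfolding disjoint_rects_def by blast
  then obtain a2 b2 c2 d2 where r: "a2 < b2" "c2 < d2" "P = {a2..b2} \<times> {c2..d2}"
    unfolding is_rect_def by blast
  have pos: "fst m \<in> side a b c d n" "fst m \<in> fst e" and "snd e = n"
    using m(2) P(3) unfolding on_aligned_def by auto
  moreover have "e \<in> (\<lambda>n. (side a2 b2 c2 d2 n, n)) ` normals"
    using P(2) r by (simp add: edges_rect)
  ultimately have "fst e = side a2 b2 c2 d2 n"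
    by auto
  then show thesis
    using that P(1) r pos by blast
qed

lemma left_partner:
  assumes "fully_consistent S M" "consistent T M" "disjoint_rects T"
    and "{a..b} \<times> {c..d} \<in> S" "a < b" "c < d"
  obtains b2 c2 d2 y where "{a..b2} \<times> {c2..d2} \<in> T" "a < b2" "c2 < d2"
    "y \<in> {c..d}" "y \<in> {c2..d2}"
proof -
  have "(-1,0) \<in> normals" by (simp add: normals_def)
  then obtain a2 b2 c2 d2 where P: "{a2..b2} \<times> {c2..d2} \<in> T" "a2 < b2" "c2 < d2"
    and meet: "side a b c d (-1,0) \<inter> side a2 b2 c2 d2 (-1,0) \<noteq> {}"
    using side_partner[OF assms] by blast
  from meet obtain p where "p \<in> side a b c d (-1,0)" "p \<in> side a2 b2 c2 d2 (-1,0)"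
    by blast
  then have "a2 = a" "snd p \<in> {c..d}" "snd p \<in> {c2..d2}"
    by (auto simp: side_def mem_Times_iff)
  then show thesis using that[of b2 c2 d2 "snd p"] P by simp
qed

lemma right_partner:
  assumes "fully_consistent S M" "consistent T M" "disjoint_rects T"
    and "{a..b} \<times> {c..d} \<in> S" "a < b" "c < d"
  obtains a2 c2 d2 y where "{a2..b} \<times> {c2..d2} \<in> T" "a2 < b" "c2 < d2"
    "y \<in> {c..d}" "y \<in> {c2..d2}"
proof -
  have "(1,0) \<in> normals" by (simp add: normals_def)
  then obtain a2 b2 c2 d2 where P: "{a2..b2} \<times> {c2..d2} \<in> T" "a2 < b2" "c2 < d2"
    and meet: "side a b c d (1,0) \<inter> side a2 b2 c2 d2 (1,0) \<noteq> {}"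
    using side_partner[OF assms] by blast
  from meet obtain p where "p \<in> side a b c d (1,0)" "p \<in> side a2 b2 c2 d2 (1,0)"
    by blast
  then have "b2 = b" "snd p \<in> {c..d}" "snd p \<in> {c2..d2}"
    by (auto simp: side_def mem_Times_iff)
  then show thesis using that[of a2 c2 d2 "snd p"] P by simp
qed

lemma top_partner:
  assumes "fully_consistent S M" "consistent T M" "disjoint_rects T"
    and "{a..b} \<times> {c..d} \<in> S" "a < b" "c < d"
  obtains a2 b2 c2 x where "{a2..b2} \<times> {c2..d} \<in> T" "a2 < b2" "c2 < d"
    "x \<in> {a..b}" "x \<in> {a2..b2}"
proof -
  have "(0,1) \<in> normals" by (simp add: normals_def)
  then obtain a2 b2 c2 d2 where P: "{a2..b2} \<times> {c2..d2} \<in> T" "a2 < b2" "c2 < d2"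
    and meet: "side a b c d (0,1) \<inter> side a2 b2 c2 d2 (0,1) \<noteq> {}"
    using side_partner[OF assms] by blast
  from meet obtain p where "p \<in> side a b c d (0,1)" "p \<in> side a2 b2 c2 d2 (0,1)"
    by blast
  then have "d2 = d" "fst p \<in> {a..b}" "fst p \<in> {a2..b2}"
    by (auto simp: side_def mem_Times_iff)
  then show thesis using that[of a2 b2 c2 "fst p"] P by simp
qed

lemma bottom_partner:
  assumes "fully_consistent S M" "consistent T M" "disjoint_rects T"
    and "{a..b} \<times> {c..d} \<in> S" "a < b" "c < d"
  obtains a2 b2 d2 x where "{a2..b2} \<times> {c..d2} \<in> T" "a2 < b2" "c < d2"
    "x \<in> {a..b}" "x \<in> {a2..b2}"
proof -
  have "(0,-1) \<in> normals" by (simp add: normals_def)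
  then obtain a2 b2 c2 d2 where P: "{a2..b2} \<times> {c2..d2} \<in> T" "a2 < b2" "c2 < d2"
    and meet: "side a b c d (0,-1) \<inter> side a2 b2 c2 d2 (0,-1) \<noteq> {}"
    using side_partner[OF assms] by blast
  from meet obtain p where "p \<in> side a b c d (0,-1)" "p \<in> side a2 b2 c2 d2 (0,-1)"
    by blast
  then have "c2 = c" "fst p \<in> {a..b}" "fst p \<in> {a2..b2}"
    by (auto simp: side_def mem_Times_iff)
  then show thesis using that[of a2 b2 d2 "fst p"] P by simp
qed

section \<open>Comparing two families that agree below a given height\<close>

definition agree_below :: "point set set \<Rightarrow> point set set \<Rightarrow> real \<Rightarrow> bool" where
  "agree_below S T d \<longleftrightarrow> (\<forall>Q\<in>S \<union> T. rect_top Q < d \<longrightarrow> Q \<in> S \<and> Q \<in> T)"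

locale agreeing_markups =
  fixes S T :: "point set set" and M :: "marker set" and d :: real
  assumes rects_S: "disjoint_rects S" and rects_T: "disjoint_rects T"
    and full_S: "fully_consistent S M" and full_T: "fully_consistent T M"
    and agree: "agree_below S T d"
begin

lemma cons_S: "consistent S M"
  using full_S unfolding fully_consistent_def by blast

lemma cons_T: "consistent T M"
  using full_T unfolding fully_consistent_def by blast

lemma swap: "agreeing_markups T S M d"
  using rects_S rects_T full_S full_T agree
  unfolding agreeing_markups_def agree_below_def by blast

text \<open>A rectangle of T meeting a rectangle of S with top d reaches height d:
  otherwise it would lie in S as well and, by disjointness, coincide with it.\<close>
lemma meeting_rect_reaches_top:
  assumes R: "{a..b} \<times> {c..d} \<in> S" and P: "{a2..b2} \<times> {c2..d2} \<in> T" "a2 < b2" "c2 < d2"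
    and p: "p \<in> {a..b} \<times> {c..d}" "p \<in> {a2..b2} \<times> {c2..d2}"
  shows "d \<le> d2"
proof (rule ccontr)
  assume low: "\<not> d \<le> d2"
  then have "rect_top ({a2..b2} \<times> {c2..d2}) < d"
    using P(2,3) by (simp add: rect_top_eq)
  then have "{a2..b2} \<times> {c2..d2} \<in> S"
    using agree P(1) unfolding agree_below_def by blast
  then have "{a2..b2} \<times> {c2..d2} = {a..b} \<times> {c..d}"
    by (rule disjoint_rects_same[OF rects_S _ R p(2,1)])
  then show False using low by (simp add: rect_eq_iff[OF P(2,3)])
qed

text \<open>In the remaining lemmas R = [a,b] x [c,d] lies in S and R' = [a',b'] x [c',d]
  in T, both with top d, and their top sides share the point x0.\<close>
lemma lower_partner_covers:
  assumes R: "{a..b} \<times> {c..d} \<in> S"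
    and R': "{a'..b'} \<times> {c'..d} \<in> T" "a' < b'" "c' < d"
    and x0: "x0 \<in> {a..b}" "x0 \<in> {a'..b'}" and lower: "c \<le> c'"
  shows "a' \<le> a \<and> b \<le> b'"
proof
  show "a' \<le> a"
  proof (rule ccontr)
    assume cut: "\<not> a' \<le> a"
    obtain b2 c2 d2 y where P: "{a'..b2} \<times> {c2..d2} \<in> S" "a' < b2" "c2 < d2"
      "y \<in> {c'..d}" "y \<in> {c2..d2}"
      using left_partner[OF full_T cons_S rects_S R'] .
    have "(a',y) \<in> {a'..b2} \<times> {c2..d2}" "(a',y) \<in> {a..b} \<times> {c..d}"
      using P(2,4,5) x0 lower cut by auto
    then have "{a'..b2} \<times> {c2..d2} = {a..b} \<times> {c..d}"
      by (rule disjoint_rects_same[OF rects_S P(1) R])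
    then show False using cut by (simp add: rect_eq_iff[OF P(2,3)])
  qed
  show "b \<le> b'"
  proof (rule ccontr)
    assume cut: "\<not> b \<le> b'"
    obtain a2 c2 d2 y where P: "{a2..b'} \<times> {c2..d2} \<in> S" "a2 < b'" "c2 < d2"
      "y \<in> {c'..d}" "y \<in> {c2..d2}"
      using right_partner[OF full_T cons_S rects_S R'] .
    have "(b',y) \<in> {a2..b'} \<times> {c2..d2}" "(b',y) \<in> {a..b} \<times> {c..d}"
      using P(2,4,5) x0 lower cut by auto
    then have "{a2..b'} \<times> {c2..d2} = {a..b} \<times> {c..d}"
      by (rule disjoint_rects_same[OF rects_S P(1) R])
    then show False using cut by (simp add: rect_eq_iff[OF P(2,3)])
  qed
qed

text \<open>Conversely R' cannot stick out of R horizontally: the rectangle of T carrying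
  the marker of the left (right) side of R reaches height d, hence contains the
  corresponding top corner of R, which lies in R' as well.\<close>
lemma partner_within:
  assumes R: "{a..b} \<times> {c..d} \<in> S" "a < b" "c < d"
    and R': "{a'..b'} \<times> {c'..d} \<in> T" "c' < d"
    and covers: "a' \<le> a" "b \<le> b'"
  shows "a \<le> a' \<and> b' \<le> b"
proof
  show "a \<le> a'"
  proof (rule ccontr)
    assume out: "\<not> a \<le> a'"
    obtain b2 c2 d2 y where P: "{a..b2} \<times> {c2..d2} \<in> T" "a < b2" "c2 < d2"
      "y \<in> {c..d}" "y \<in> {c2..d2}"
      using left_partner[OF full_S cons_T rects_T R] .
    have "d \<le> d2"
      using meeting_rect_reaches_top[OF R(1) P(1-3), of "(a,y)"] P(2,4,5) R(2) by auto
    then have "(a,d) \<in> {a..b2} \<times> {c2..d2}" "(a,d) \<in> {a'..b'} \<times> {c'..d}"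
      using P(2,4,5) R(2,3) R'(2) covers out by auto
    then have "{a..b2} \<times> {c2..d2} = {a'..b'} \<times> {c'..d}"
      by (rule disjoint_rects_same[OF rects_T P(1) R'(1)])
    then show False using out by (simp add: rect_eq_iff[OF P(2,3)])
  qed
  show "b' \<le> b"
  proof (rule ccontr)
    assume out: "\<not> b' \<le> b"
    obtain a2 c2 d2 y where P: "{a2..b} \<times> {c2..d2} \<in> T" "a2 < b" "c2 < d2"
      "y \<in> {c..d}" "y \<in> {c2..d2}"
      using right_partner[OF full_S cons_T rects_T R] .
    have "d \<le> d2"
      using meeting_rect_reaches_top[OF R(1) P(1-3), of "(b,y)"] P(2,4,5) R(2) by auto
    then have "(b,d) \<in> {a2..b} \<times> {c2..d2}" "(b,d) \<in> {a'..b'} \<times> {c'..d}"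
      using P(2,4,5) R(2,3) R'(2) covers out by auto
    then have "{a2..b} \<times> {c2..d2} = {a'..b'} \<times> {c'..d}"
      by (rule disjoint_rects_same[OF rects_T P(1) R'(1)])
    then show False using out by (simp add: rect_eq_iff[OF P(2,3)])
  qed
qed

lemma partner_bottom:
  assumes R: "{a..b} \<times> {c..d} \<in> S"
    and R': "{a'..b'} \<times> {c'..d} \<in> T" "a' < b'" "c' < d"
    and within: "a \<le> a'" "b' \<le> b"
  shows "c' \<le> c"
proof (rule ccontr)
  assume cut: "\<not> c' \<le> c"
  obtain a2 b2 d2 x where P: "{a2..b2} \<times> {c'..d2} \<in> S" "a2 < b2" "c' < d2"
    "x \<in> {a'..b'}" "x \<in> {a2..b2}"
    using bottom_partner[OF full_T cons_S rects_S R'] .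
  have "(x,c') \<in> {a2..b2} \<times> {c'..d2}" "(x,c') \<in> {a..b} \<times> {c..d}"
    using P(3-5) R'(3) within cut by auto
  then have "{a2..b2} \<times> {c'..d2} = {a..b} \<times> {c..d}"
    by (rule disjoint_rects_same[OF rects_S P(1) R])
  then show False using cut by (simp add: rect_eq_iff[OF P(2,3)])
qed

lemma lower_partner_eq:
  assumes R: "{a..b} \<times> {c..d} \<in> S" "a < b" "c < d"
    and R': "{a'..b'} \<times> {c'..d} \<in> T" "a' < b'" "c' < d"
    and x0: "x0 \<in> {a..b}" "x0 \<in> {a'..b'}" and lower: "c \<le> c'"
  shows "{a'..b'} \<times> {c'..d} = {a..b} \<times> {c..d}"
proof -
  have covers: "a' \<le> a" "b \<le> b'"
    using lower_partner_covers[OF R(1) R' x0 lower] by auto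
  then have "a \<le> a'" "b' \<le> b"
    using partner_within[OF R R'(1,3)] by auto
  moreover from this have "c' \<le> c"
    using partner_bottom[OF R(1) R'] by blast
  ultimately show ?thesis using covers lower by auto
qed

text \<open>A rectangle of S with top d also lies in T: the marker on its top side
  yields a rectangle of T with top d, and whichever of the two is not taller
  coincides with the other.\<close>
lemma top_rect_in_other:
  assumes R: "{a..b} \<times> {c..d} \<in> S" "a < b" "c < d"
  shows "{a..b} \<times> {c..d} \<in> T"
proof -
  obtain a' b' c' x where R': "{a'..b'} \<times> {c'..d} \<in> T" "a' < b'" "c' < d"
    and x: "x \<in> {a..b}" "x \<in> {a'..b'}"
    using top_partner[OF full_S cons_T rects_T R] .
  show ?thesis
  proof (cases "c \<le> c'")
    case True
    then show ?thesis using lower_partner_eq[OF R R' x] R'(1) by simp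
  next
    case False
    then have "{a..b} \<times> {c..d} = {a'..b'} \<times> {c'..d}"
      using agreeing_markups.lower_partner_eq[OF swap R' R x(2,1)] by simp
    then show ?thesis using R'(1) by simp
  qed
qed

lemma top_rect_shared:
  assumes "Q \<in> S \<union> T" "is_rect Q" "rect_top Q = d"
  shows "Q \<in> S \<and> Q \<in> T"
proof -
  obtain a b c e where Q: "a < b" "c < e" "Q = {a..b} \<times> {c..e}"
    using assms(2) unfolding is_rect_def by blast
  then have "e = d" using assms(3) by (simp add: rect_top_eq)
  then show ?thesis
    using assms(1) Q top_rect_in_other agreeing_markups.top_rect_in_other[OF swap] by auto
qed

end

text \<open>If two markups differed, a rectangle of the symmetric difference with
  lowest top would, by top_rect_shared, lie in both families.\<close>
theorem mainTheorem14:
  fixes S S' :: "(real \<times> real) set set" and M :: "((real \<times> real) \<times> (real \<times> real)) set"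
  assumes "finite S" "\<forall>Q\<in>S. is_rect Q" "pairwise disjnt S"
    and "finite S'" "\<forall>Q\<in>S'. is_rect Q" "pairwise disjnt S'"
    and "finite M" "\<forall>m\<in>M. is_marker m"
    and "fully_consistent S M" "fully_consistent S' M"
  shows "S = S'"
proof (rule ccontr)
  assume "S \<noteq> S'"
  define D where "D = (S - S') \<union> (S' - S)"
  have "finite D" "D \<noteq> {}"
    using assms(1,4) \<open>S \<noteq> S'\<close> unfolding D_def by auto
  define R where "R = arg_min_on rect_top D"
  have R: "R \<in> D" and lowest: "\<not> (\<exists>Q\<in>D. rect_top Q < rect_top R)"
    unfolding R_def using arg_min_if_finite[OF \<open>finite D\<close> \<open>D \<noteq> {}\<close>] by blast+
  have "agree_below S S' (rect_top R)"
    using lowest unfolding agree_below_def D_def by blast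
  then interpret agreeing_markups S S' M "rect_top R"
    using assms(2,3,5,6,9,10) by unfold_locales (simp_all add: disjoint_rects_def)
  have "R \<in> S \<and> R \<in> S'"
    using top_rect_shared R assms(2,5) unfolding D_def by blast
  then show False using R unfolding D_def by blast
qed

end
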